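(* There exists $K_0>0$ such that for every $R>2$ and every $y\in[2,3]$, the function $x\mapsto\sqrt{\iota_R(x,y)}$ is continuously differentiable on $[0,\infty)$ and for all $x\ge0$, $$0\le\partial_x\sqrt{\iota_R(x,y)}\le K_0\sqrt{y-2}\,g_R(x,y),\qquad 0\le\sqrt{\iota_R(x,y)}\le K_0\sqrt{y-2}\,\rho_R(x,y).$$
   Context: Let $\xi$ be a nondecreasing $C^2$ function on $[0,\infty)$ with $\xi(x)=(x-1)^3\vee0$ for $x\in[0,3/2]$ and $\xi(x)=1$ for $x\ge2$. For $x\ge0$, $y\ge2$: $\zeta(x,y)=2x+(yx^{y-1}-2x)\xi(x)$. For $R>2$: $g_R(x,y)=\sqrt{(\partial_x\zeta)(x\wedge R,y)}$, $h_R(x,y)=\int_0^xg_R(s,y)^2\,ds$, $\phi_R(x,y)=\int_0^xh_R(s,y)\,ds$, $\rho_R(x,y)=\int_0^xg_R(s,y)\,ds$, $\iota_R(x,y)=xh_R(x,y)-2\phi_R(x,y)$. *)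

theory Defs
  imports "HOL-Analysis.Analysis"
begin

text \<open>The cutoff function xi is a parameter; its hypotheses are stated in the theorem.
  All functions below are only meaningful for x \<ge> 0, y \<ge> 2.\<close>

definition zeta :: "(real \<Rightarrow> real) \<Rightarrow> real \<Rightarrow> real \<Rightarrow> real" where
  "zeta xi x y = 2 * x + (y * x powr (y - 1) - 2 * x) * xi x"

definition dzeta :: "(real \<Rightarrow> real) \<Rightarrow> real \<Rightarrow> real \<Rightarrow> real" where
  "dzeta xi x y = (THE D. ((\<lambda>s. zeta xi s y) has_real_derivative D) (at x within {0..}))"

definition gR :: "(real \<Rightarrow> real) \<Rightarrow> real \<Rightarrow> real \<Rightarrow> real \<Rightarrow> real" where
  "gR xi R x y = sqrt (dzeta xi (min x R) y)"

definition hR :: "(real \<Rightarrow> real) \<Rightarrow> real \<Rightarrow> real \<Rightarrow> real \<Rightarrow> real" where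
  "hR xi R x y = integral {0..x} (\<lambda>s. (gR xi R s y)\<^sup>2)"

definition phiR :: "(real \<Rightarrow> real) \<Rightarrow> real \<Rightarrow> real \<Rightarrow> real \<Rightarrow> real" where
  "phiR xi R x y = integral {0..x} (\<lambda>s. hR xi R s y)"

definition rhoR :: "(real \<Rightarrow> real) \<Rightarrow> real \<Rightarrow> real \<Rightarrow> real \<Rightarrow> real" where
  "rhoR xi R x y = integral {0..x} (\<lambda>s. gR xi R s y)"

definition iotaR :: "(real \<Rightarrow> real) \<Rightarrow> real \<Rightarrow> real \<Rightarrow> real \<Rightarrow> real" where
  "iotaR xi R x y = x * hR xi R x y - 2 * phiR xi R x y"

end

theory Submission
  imports Defs
begin

text \<open>
  With g^2 = \<zeta>'(min x R) and h = \<integral>g^2 one has \<iota>' = x g^2 - h = \<nu>(min x R), where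
  \<nu>(t) = t \<zeta>'(t) - \<zeta>(t) is nonnegative and zero on [0,1]; so \<iota> is nondecreasing and
  vanishes on [0,1]. The heart of the proof is the estimate \<nu>(min x R)^2 \<le> 4 K^2 (y - 2) g^2 \<iota>, checked separately on [0,1]
  (\<nu> = 0), on [1,3/2] (\<xi> is the cubic, \<nu> \<lesssim> (y-2)(x-1)^2 and \<iota> \<greatersim> (y-2)(x-1)^3), on [3/2,2]
  (\<nu> \<lesssim> y-2 \<lesssim> \<iota>) and on [2,R] (\<xi> = 1, everything is an explicit power of x); beyond R,
  \<iota>' and g are frozen while \<iota> grows. Hence (\<surd>\<iota>)' = \<iota>'/(2\<surd>\<iota>) \<le> K \<surd>(y-2) g wherever
  \<iota> > 0, and integrating gives \<surd>\<iota> \<le> K \<surd>(y-2) \<rho>. Where \<iota> vanishes, \<surd>\<iota> has derivative 0: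
  the only delicate point is x = 1, where \<iota> \<le> 27 (y-2)(x-1)^3 makes \<surd>\<iota> = O(|x-1|^(3/2)).
  The constant is K = 24 + 40 M for any bound M of \<xi>' on [0,2].
\<close>

lemma has_field_derivative_unique_Icc:
  fixes f g :: "real \<Rightarrow> real"
  assumes "a < b" "x \<in> {a..b}"
    and "(f has_real_derivative D) (at x within {a..b})"
    and "(g has_real_derivative E) (at x within {a..b})"
    and "\<And>s. s \<in> {a..b} \<Longrightarrow> f s = g s"
  shows "D = E"
proof (rule has_field_derivative_unique)
  show "(g has_real_derivative D) (at x within {a..b})"
    by (rule has_field_derivative_transform_within[OF assms(3), of 1]) (use assms in auto)
  show "at x within {a..b} \<noteq> bot"
    using assms(1,2) by (simp add: trivial_limit_within)
qed (fact assms(4))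

lemma at_within_Icc_eq_Ici:
  fixes a b x :: real
  assumes "x < b"
  shows "at x within {a..b} = at x within {a..}"
  by (rule at_within_nhd[of x "{..<b}"]) (use assms in auto)

lemma at_within_Ici_eq_at:
  fixes a x :: real
  assumes "a < x"
  shows "at x within {a..} = at x"
  by (rule at_within_interior) (use assms in auto)

lemma integral_has_real_derivative_Ici:
  fixes f :: "real \<Rightarrow> real"
  assumes "continuous_on {a..} f" "a \<le> x"
  shows "((\<lambda>u. integral {a..u} f) has_real_derivative f x) (at x within {a..})"
proof -
  have "continuous_on {a..x+1} f"
    by (rule continuous_on_subset[OF assms(1)]) auto
  then have "((\<lambda>u. integral {a..u} f) has_vector_derivative f x) (at x within {a..x+1})"
    by (rule integral_has_vector_derivative) (use assms in auto)
  then show ?thesis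
    by (simp add: has_real_derivative_iff_has_vector_derivative at_within_Icc_eq_Ici)
qed

lemma DERIV_le_imp_increment_le:
  fixes f g f' g' :: "real \<Rightarrow> real"
  assumes "a \<le> b" "continuous_on {a..b} f" "continuous_on {a..b} g"
    and "\<And>t. a < t \<Longrightarrow> t < b \<Longrightarrow> (f has_real_derivative f' t) (at t)"
    and "\<And>t. a < t \<Longrightarrow> t < b \<Longrightarrow> (g has_real_derivative g' t) (at t)"
    and "\<And>t. a < t \<Longrightarrow> t < b \<Longrightarrow> f' t \<le> g' t"
  shows "f b - f a \<le> g b - g a"
proof -
  have "(\<lambda>t. g t - f t) a \<le> (\<lambda>t. g t - f t) b"
  proof (rule DERIV_nonneg_imp_increasing_open[OF assms(1)])
    fix t assume "a < t" "t < b"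
    then show "\<exists>y. ((\<lambda>t. g t - f t) has_real_derivative y) (at t) \<and> 0 \<le> y"
      using assms(4-6) by (intro exI[of _ "g' t - f' t"]) (auto intro: derivative_intros)
  qed (use assms(2,3) in \<open>intro continuous_intros\<close>)
  then show ?thesis by simp
qed

lemma has_real_derivative_zero_if_small:
  fixes f e :: "real \<Rightarrow> real"
  assumes "f x = 0"
    and "eventually (\<lambda>s. \<bar>f s\<bar> \<le> e s * \<bar>s - x\<bar>) (at x within S)"
    and "(e \<longlongrightarrow> 0) (at x within S)"
  shows "(f has_real_derivative 0) (at x within S)"
proof -
  have "eventually (\<lambda>s. norm ((f s - f x) / (s - x)) \<le> e s) (at x within S)"
    using assms(2) eventually_neq_at_within[of x x S]
    by eventually_elim (use assms(1) in \<open>auto simp: divide_le_eq\<close>)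
  from Lim_null_comparison[OF this assms(3)] show ?thesis
    by (simp add: has_field_derivative_iff)
qed

lemma powr_le_one_plus_two_mult:
  fixes t e :: real
  assumes "1 \<le> t" "t \<le> 2" "0 \<le> e" "e \<le> 1"
  shows "t powr e \<le> 1 + 2 * e"
proof -
  have "0 \<le> ln t" "ln t \<le> 1"
    using assms ln_le_minus_one[of t] by auto
  then have u: "0 \<le> e * ln t" "e * ln t \<le> e"
    using assms by (auto intro: mult_left_le)
  then have "e * ln t \<le> 1" using assms(4) by linarith
  have "t powr e = exp (e * ln t)" using assms by (simp add: powr_def)
  also have "\<dots> \<le> 1 + e * ln t + (e * ln t)\<^sup>2"
    using u \<open>e * ln t \<le> 1\<close> by (intro exp_bound)
  also have "\<dots> \<le> 1 + 2 * (e * ln t)"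
    using u \<open>e * ln t \<le> 1\<close> by (simp add: power2_eq_square mult_left_le)
  also have "\<dots> \<le> 1 + 2 * e" using u by simp
  finally show ?thesis .
qed

section \<open>The cutoff function\<close>

locale smooth_cutoff =
  fixes xi xi' :: "real \<Rightarrow> real"
  assumes xi_mono: "mono_on {0..} xi"
    and xi_deriv: "\<And>x. 0 \<le> x \<Longrightarrow> (xi has_real_derivative xi' x) (at x within {0..})"
    and xi'_continuous: "continuous_on {0..} xi'"
    and xi_low: "\<And>x. 0 \<le> x \<Longrightarrow> x \<le> 3/2 \<Longrightarrow> xi x = max ((x - 1) ^ 3) 0"
    and xi_high: "\<And>x. 2 \<le> x \<Longrightarrow> xi x = 1"
begin

lemma xi_eq_0: "0 \<le> x \<Longrightarrow> x \<le> 1 \<Longrightarrow> xi x = 0"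
  using xi_low[of x] by (simp add: max_def)

lemma xi_eq_cube: "1 \<le> x \<Longrightarrow> x \<le> 3/2 \<Longrightarrow> xi x = (x - 1) ^ 3"
  using xi_low[of x] by auto

lemma xi_nonneg: "0 \<le> x \<Longrightarrow> 0 \<le> xi x"
  using mono_onD[OF xi_mono, of 0 x] xi_eq_0[of 0] by auto

lemma xi_le_1: "0 \<le> x \<Longrightarrow> xi x \<le> 1"
  using mono_onD[OF xi_mono, of x 2] xi_high[of x] xi_high[of 2] by (cases "x \<le> 2") auto

lemma xi_ge_one_eighth: "3/2 \<le> x \<Longrightarrow> 1/8 \<le> xi x"
  using mono_onD[OF xi_mono, of "3/2" x] xi_eq_cube[of "3/2"] by (auto simp: power3_eq_cube)

lemma xi_continuous: "continuous_on {0..} xi"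
  using xi_deriv by (rule DERIV_continuous_on) simp

lemma xi_deriv_Icc: "0 \<le> a \<Longrightarrow> x \<in> {a..b} \<Longrightarrow> (xi has_real_derivative xi' x) (at x within {a..b})"
  by (rule DERIV_subset[OF xi_deriv]) auto

lemma xi'_eq_0_low: "0 \<le> x \<Longrightarrow> x \<le> 1 \<Longrightarrow> xi' x = 0"
  by (rule has_field_derivative_unique_Icc[of 0 1 x xi _ "\<lambda>_. 0"]) (auto intro!: xi_deriv_Icc xi_eq_0)

lemma xi'_eq_cube: "1 \<le> x \<Longrightarrow> x \<le> 3/2 \<Longrightarrow> xi' x = 3 * (x - 1)\<^sup>2"
  by (rule has_field_derivative_unique_Icc[of 1 "3/2" x xi _ "\<lambda>x. (x - 1) ^ 3"])
     (auto intro!: xi_deriv_Icc xi_eq_cube derivative_eq_intros)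

lemma xi'_eq_0_high: "2 \<le> x \<Longrightarrow> xi' x = 0"
  by (rule has_field_derivative_unique_Icc[of x "x + 1" x xi _ "\<lambda>_. 1"]) (auto intro!: xi_deriv_Icc xi_high)

lemma xi'_nonneg:
  assumes "0 \<le> x"
  shows "0 \<le> xi' x"
proof (cases "x = 0")
  case False
  then have "(xi has_real_derivative xi' x) (at x)"
    using assms xi_deriv[OF assms] by (simp add: at_within_Ici_eq_at)
  then show ?thesis using mono_on_imp_deriv_nonneg[OF xi_mono] assms False by auto
qed (simp add: xi'_eq_0_low)

lemma xi'_bounded: "\<exists>M. \<forall>x\<in>{0..2}. xi' x \<le> M"
proof -
  have "compact (xi' ` {0..2})"
    by (rule compact_continuous_image) (auto intro: continuous_on_subset[OF xi'_continuous])
  then show ?thesis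
    using compact_imp_bounded bounded_iff by (metis abs_le_D1 image_eqI real_norm_def)
qed

end

section \<open>The functions \<zeta>, h, \<iota> and \<rho> for fixed y and R\<close>

locale iota_setting = smooth_cutoff +
  fixes y R M :: real
  assumes y_ge_2: "2 \<le> y" and y_le_3: "y \<le> 3" and R_gt_2: "2 < R"
    and xi'_le_M: "\<And>x. 0 \<le> x \<Longrightarrow> x \<le> 2 \<Longrightarrow> xi' x \<le> M"
begin

definition zeta' :: "real \<Rightarrow> real" where
  "zeta' t = 2 + (y * (y - 1) * t powr (y - 2) - 2) * xi t + (y * t powr (y - 1) - 2 * t) * xi' t"

lemma zeta'_eq_2: "0 \<le> t \<Longrightarrow> t \<le> 1 \<Longrightarrow> zeta' t = 2"
  unfolding zeta'_def using xi_eq_0 xi'_eq_0_low by simp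

lemma zeta_eq_linear: "0 \<le> t \<Longrightarrow> t \<le> 1 \<Longrightarrow> zeta xi t y = 2 * t"
  unfolding zeta_def using xi_eq_0 by simp

lemma has_real_derivative_zeta:
  assumes "0 \<le> t"
  shows "((\<lambda>s. zeta xi s y) has_real_derivative zeta' t) (at t within {0..})"
proof (cases "t = 0")
  case True
  have "((\<lambda>s. 2 * s) has_real_derivative 2) (at t within {0..})"
    by (auto intro!: derivative_eq_intros)
  then have "((\<lambda>s. zeta xi s y) has_real_derivative 2) (at t within {0..})"
    by (rule has_field_derivative_transform_within[where d=1])
       (use True zeta_eq_linear in \<open>auto simp: dist_real_def\<close>)
  then show ?thesis using zeta'_eq_2 True by simp
next
  case False
  then have "0 < t" using assms by simp
  have "((\<lambda>s. 2 * s + (y * s powr (y - 1) - 2 * s) * xi s) has_real_derivative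
      2 + ((y * ((y - 1) * t powr (y - 1 - 1)) - 2) * xi t + (y * t powr (y - 1) - 2 * t) * xi' t))
      (at t within {0..})"
    using \<open>0 < t\<close> assms by (auto intro!: derivative_eq_intros xi_deriv)
  moreover have "y - 1 - 1 = y - 2" by simp
  ultimately show ?thesis unfolding zeta_def zeta'_def by (simp add: algebra_simps)
qed

lemma dzeta_eq_zeta':
  assumes "0 \<le> t"
  shows "dzeta xi t y = zeta' t"
  unfolding dzeta_def
proof (rule the_equality)
  show "((\<lambda>s. zeta xi s y) has_real_derivative zeta' t) (at t within {0..})"
    by (rule has_real_derivative_zeta[OF assms])
next
  fix D assume "((\<lambda>s. zeta xi s y) has_real_derivative D) (at t within {0..})"
  then show "D = zeta' t"
    using has_field_derivative_unique_Icc[of t "t + 1" t "\<lambda>s. zeta xi s y" D _ "zeta' t"]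
      DERIV_subset[OF has_real_derivative_zeta[OF assms], of "{t..t+1}"] assms
    by (auto dest: DERIV_subset[of _ _ _ _ "{t..t+1}"])
qed

lemma one_le_powr_y_minus_2: "1 \<le> t \<Longrightarrow> 1 \<le> t powr (y - 2)"
  using y_ge_2 by (intro ge_one_powr_ge_zero) auto

lemma powr_y_minus_1_eq: "0 \<le> t \<Longrightarrow> t powr (y - 1) = t * t powr (y - 2)"
  using powr_add[of t 1 "y - 2"] by (cases "t = 0") auto

lemma y_powr_minus_2_ge: "1 \<le> t \<Longrightarrow> y - 2 \<le> y * t powr (y - 2) - 2"
  using mult_left_mono[OF one_le_powr_y_minus_2, of t y] y_ge_2 by simp

lemma y_powr_minus_2_le:
  assumes "1 \<le> t" "t \<le> 2"
  shows "y * t powr (y - 2) - 2 \<le> 10 * (y - 2)"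
proof -
  have "y * t powr (y - 2) \<le> y * (1 + 2 * (y - 2))"
    using powr_le_one_plus_two_mult[of t "y - 2"] assms y_ge_2 y_le_3 by (intro mult_left_mono) auto
  also have "\<dots> \<le> 2 + 10 * (y - 2)"
    using mult_right_mono[OF y_le_3, of "y - 2"] y_ge_2 by (simp add: algebra_simps)
  finally show ?thesis by simp
qed

lemma zeta'_ge_2:
  assumes "0 \<le> t"
  shows "2 \<le> zeta' t"
proof (cases "t \<le> 1")
  case False
  then have "1 \<le> t" by simp
  have "2 \<le> y * (y - 1)" using y_ge_2 mult_mono[of 2 y 1 "y - 1"] by simp
  also have "\<dots> \<le> y * (y - 1) * t powr (y - 2)"
    using mult_left_mono[OF one_le_powr_y_minus_2[OF \<open>1 \<le> t\<close>], of "y * (y - 1)"] y_ge_2 by simp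
  finally have "0 \<le> (y * (y - 1) * t powr (y - 2) - 2) * xi t" using xi_nonneg assms by simp
  moreover have "y * t powr (y - 1) - 2 * t = t * (y * t powr (y - 2) - 2)"
    using powr_y_minus_1_eq[OF assms] by (simp add: algebra_simps)
  moreover have "0 \<le> y * t powr (y - 2) - 2"
    using y_powr_minus_2_ge[OF \<open>1 \<le> t\<close>] y_ge_2 by linarith
  ultimately show ?thesis
    unfolding zeta'_def using assms xi'_nonneg[OF assms] by simp
qed (use zeta'_eq_2 assms in simp)

lemma continuous_on_zeta': "continuous_on {0..} zeta'"
proof -
  have "continuous_on {0..1} zeta'"
    by (rule continuous_on_cong[THEN iffD2, OF refl _ continuous_on_const[of _ 2]]) (auto simp: zeta'_eq_2)
  moreover have "continuous_on {1..} zeta'"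
    unfolding zeta'_def
    by (intro continuous_intros continuous_on_subset[OF xi_continuous] continuous_on_subset[OF xi'_continuous]) auto
  ultimately have "continuous_on ({0..1} \<union> {1..}) zeta'" by (intro continuous_on_closed_Un) auto
  moreover have "{0..1} \<union> {1..} = {0::real..}" by auto
  ultimately show ?thesis by simp
qed

text \<open>
  Since dzeta is zeta' (dzeta_eq_zeta'), on [0,\<infinity>) gsq, h, iota and rho coincide with g_R^2, h_R,
  \<iota>_R and \<rho>_R (gR_squared, hR_eq, iotaR_eq, rhoR_eq), and iota' is \<partial>_x\<iota>_R.
\<close>

definition gsq :: "real \<Rightarrow> real" where "gsq s = zeta' (min s R)"
definition h :: "real \<Rightarrow> real" where "h x = integral {0..x} gsq"
definition iota :: "real \<Rightarrow> real" where "iota x = x * h x - 2 * integral {0..x} h"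
definition rho :: "real \<Rightarrow> real" where "rho x = integral {0..x} (\<lambda>s. sqrt (gsq s))"
definition nu :: "real \<Rightarrow> real" where "nu t = t * zeta' t - zeta xi t y"
definition iota' :: "real \<Rightarrow> real" where "iota' x = nu (min x R)"

lemma continuous_on_gsq: "continuous_on {0..} gsq"
  unfolding gsq_def using R_gt_2
  by (intro continuous_on_compose2[OF continuous_on_zeta', of "{0..}" "\<lambda>s. min s R"])
     (auto intro!: continuous_intros)

lemma gsq_ge_2: "0 \<le> s \<Longrightarrow> 2 \<le> gsq s"
  unfolding gsq_def using zeta'_ge_2 R_gt_2 by simp

lemma gR_eq: "0 \<le> s \<Longrightarrow> gR xi R s y = sqrt (gsq s)"
  unfolding gR_def gsq_def using dzeta_eq_zeta' R_gt_2 by simp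

lemma gR_squared: "0 \<le> s \<Longrightarrow> (gR xi R s y)\<^sup>2 = gsq s"
  using gR_eq gsq_ge_2[of s] by simp

lemma hR_eq: "0 \<le> x \<Longrightarrow> hR xi R x y = h x"
  unfolding hR_def h_def by (intro integral_cong) (auto simp: gR_squared)

lemma iotaR_eq: "0 \<le> x \<Longrightarrow> iotaR xi R x y = iota x"
proof -
  assume "0 \<le> x"
  then have "phiR xi R x y = integral {0..x} h"
    unfolding phiR_def by (intro integral_cong) (auto simp: hR_eq)
  then show ?thesis unfolding iotaR_def iota_def using hR_eq \<open>0 \<le> x\<close> by simp
qed

lemma rhoR_eq: "0 \<le> x \<Longrightarrow> rhoR xi R x y = rho x"
  unfolding rhoR_def rho_def by (intro integral_cong) (auto simp: gR_eq)

lemma has_real_derivative_h: "0 \<le> x \<Longrightarrow> (h has_real_derivative gsq x) (at x within {0..})"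
  unfolding h_def[abs_def] by (rule integral_has_real_derivative_Ici[OF continuous_on_gsq])

lemma has_real_derivative_rho: "0 \<le> x \<Longrightarrow> (rho has_real_derivative sqrt (gsq x)) (at x within {0..})"
  unfolding rho_def[abs_def]
  by (rule integral_has_real_derivative_Ici) (intro continuous_intros continuous_on_gsq)

lemma integral_zeta': "0 \<le> x \<Longrightarrow> integral {0..x} zeta' = zeta xi x y"
proof -
  assume "0 \<le> x"
  then have "(zeta' has_integral (zeta xi x y - zeta xi 0 y)) {0..x}"
    by (intro fundamental_theorem_of_calculus)
       (auto simp: has_real_derivative_iff_has_vector_derivative[symmetric]
         intro!: DERIV_subset[OF has_real_derivative_zeta])
  then show ?thesis using zeta_eq_linear[of 0] by (simp add: integral_unique)
qed

lemma h_eq: assumes "0 \<le> x" shows "h x = zeta xi (min x R) y + (x - min x R) * zeta' R"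
proof (cases "x \<le> R")
  case True
  have "integral {0..x} gsq = integral {0..x} zeta'"
    by (rule integral_cong) (use True in \<open>auto simp: gsq_def\<close>)
  then show ?thesis using True integral_zeta'[OF assms] unfolding h_def by simp
next
  case False
  have "integral {0..R} gsq = integral {0..R} zeta'"
    by (rule integral_cong) (auto simp: gsq_def)
  moreover have "gsq integrable_on {0..x}"
    by (rule integrable_continuous_real) (rule continuous_on_subset[OF continuous_on_gsq], auto)
  then have "integral {0..R} gsq + integral {R..x} gsq = integral {0..x} gsq"
    by (rule Henstock_Kurzweil_Integration.integral_combine[rotated 2]) (use False R_gt_2 in auto)
  moreover have "integral {R..x} gsq = integral {R..x} (\<lambda>_. zeta' R)"
    by (rule integral_cong) (auto simp: gsq_def)
  ultimately show ?thesis
    using False R_gt_2 integral_zeta'[of R] unfolding h_def by simp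
qed

lemma has_real_derivative_iota:
  assumes "0 \<le> x"
  shows "(iota has_real_derivative iota' x) (at x within {0..})"
proof -
  have "continuous_on {0..} h"
    using has_real_derivative_h by (rule DERIV_continuous_on) simp
  then have "((\<lambda>u. integral {0..u} h) has_real_derivative h x) (at x within {0..})"
    using assms by (rule integral_has_real_derivative_Ici)
  then have "(iota has_real_derivative x * gsq x - h x) (at x within {0..})"
    unfolding iota_def[abs_def] using assms
    by (auto intro!: derivative_eq_intros has_real_derivative_h simp: algebra_simps)
  moreover have "x * gsq x - h x = iota' x"
    using h_eq[OF assms] by (cases "x \<le> R") (auto simp: gsq_def iota'_def nu_def algebra_simps)
  ultimately show ?thesis by simp
qed

lemma has_real_derivative_iota_at: "0 < x \<Longrightarrow> (iota has_real_derivative iota' x) (at x)"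
  using has_real_derivative_iota[of x] by (simp add: at_within_Ici_eq_at)

lemma continuous_on_iota: "continuous_on {0..} iota"
  using has_real_derivative_iota by (rule DERIV_continuous_on) simp

lemma iota_0: "iota 0 = 0"
  by (simp add: iota_def)

lemma continuous_on_iota': "continuous_on {0..} iota'"
proof -
  have "continuous_on {0..} (\<lambda>t. zeta xi t y)"
    using has_real_derivative_zeta by (rule DERIV_continuous_on) simp
  then have "continuous_on {0..} nu"
    unfolding nu_def[abs_def] by (intro continuous_intros continuous_on_zeta')
  then show ?thesis unfolding iota'_def[abs_def] using R_gt_2
    by (intro continuous_on_compose2[of "{0..}" nu "{0..}" "\<lambda>s. min s R"]) (auto intro!: continuous_intros)
qed

section \<open>Estimates for \<nu> and \<iota>\<close>

lemma powr_y_minus_2_le_3: "1 \<le> t \<Longrightarrow> t \<le> 2 \<Longrightarrow> t powr (y - 2) \<le> 3"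
  using powr_le_one_plus_two_mult[of t "y - 2"] y_ge_2 y_le_3 by simp

lemma y_powr_minus_2_nonneg: "1 \<le> t \<Longrightarrow> 0 \<le> y * t powr (y - 2) - 2"
  using y_powr_minus_2_ge[of t] y_ge_2 by linarith

lemma nu_eq:
  assumes "0 \<le> t"
  shows "nu t = y * (y - 2) * t * t powr (y - 2) * xi t + t\<^sup>2 * (y * t powr (y - 2) - 2) * xi' t"
  unfolding nu_def zeta'_def zeta_def powr_y_minus_1_eq[OF assms]
  by (simp add: algebra_simps power2_eq_square)

lemma nu_eq_0: assumes "0 \<le> t" "t \<le> 1 \<or> y = 2" shows "nu t = 0"
  using assms nu_eq[OF assms(1)] xi_eq_0 xi'_eq_0_low by (cases "t = 0") auto

lemma nu_nonneg: assumes "0 \<le> t" shows "0 \<le> nu t"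
proof (cases "t \<le> 1")
  case False
  then show ?thesis
    using nu_eq[OF assms] y_powr_minus_2_nonneg[of t] y_ge_2 xi_nonneg[OF assms] xi'_nonneg[OF assms]
    by simp
qed (use nu_eq_0 assms in simp)

lemma nu_lower_cubic:
  assumes "1 \<le> t" "t \<le> 3/2"
  shows "3 * (y - 2) * (t - 1)\<^sup>2 \<le> nu t"
proof -
  have "0 \<le> y * (y - 2) * t * t powr (y - 2) * xi t" using y_ge_2 assms xi_nonneg[of t] by simp
  moreover have "(y - 2) * 1 \<le> (y * t powr (y - 2) - 2) * t\<^sup>2"
    using y_powr_minus_2_ge[of t] y_powr_minus_2_nonneg[of t] assms y_ge_2
    by (intro mult_mono) (auto simp: one_le_power)
  then have "(y - 2) * (3 * (t - 1)\<^sup>2) \<le> (y * t powr (y - 2) - 2) * t\<^sup>2 * (3 * (t - 1)\<^sup>2)"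
    by (intro mult_right_mono) auto
  then have "3 * (y - 2) * (t - 1)\<^sup>2 \<le> t\<^sup>2 * (y * t powr (y - 2) - 2) * xi' t"
    using xi'_eq_cube[OF assms] by (simp add: algebra_simps)
  ultimately show ?thesis using nu_eq[of t] assms by simp
qed

lemma nu_upper_cubic:
  assumes "1 \<le> t" "t \<le> 3/2"
  shows "nu t \<le> 80 * (y - 2) * (t - 1)\<^sup>2"
proof -
  define a e p where "a = t - 1" and "e = y - 2" and "p = t powr (y - 2)"
  have a: "0 \<le> a" "a \<le> 1/2" using assms by (auto simp: a_def)
  have e: "0 \<le> e" "e \<le> 1" using y_ge_2 y_le_3 by (auto simp: e_def)
  have p: "1 \<le> p" "p \<le> 3"
    using one_le_powr_y_minus_2[of t] powr_y_minus_2_le_3[of t] assms by (auto simp: p_def)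
  have "a ^ 3 \<le> a\<^sup>2 * (1/2)"
    using mult_left_mono[OF a(2), of "a\<^sup>2"] by (simp add: power3_eq_cube power2_eq_square)
  then have first: "y * e * t * p * a ^ 3 \<le> 3 * e * (3/2) * 3 * (a\<^sup>2 * (1/2))"
    using a e p y_ge_2 y_le_3 assms by (intro mult_mono) (auto intro!: mult_nonneg_nonneg)
  have "t\<^sup>2 \<le> 9/4" using mult_mono[OF assms(2) assms(2)] assms by (simp add: power2_eq_square)
  then have "t\<^sup>2 * (y * p - 2) \<le> (9/4) * (10 * e)"
    using y_powr_minus_2_le[of t] y_powr_minus_2_nonneg[of t] assms
    by (intro mult_mono) (auto simp: p_def e_def)
  then have second: "t\<^sup>2 * (y * p - 2) * (3 * a\<^sup>2) \<le> (9/4) * (10 * e) * (3 * a\<^sup>2)"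
    by (rule mult_right_mono) auto
  have "nu t = y * e * t * p * a ^ 3 + t\<^sup>2 * (y * p - 2) * (3 * a\<^sup>2)"
    using nu_eq[of t] assms xi_eq_cube xi'_eq_cube by (simp add: a_def e_def p_def)
  also have "\<dots> \<le> 3 * e * (3/2) * 3 * (a\<^sup>2 * (1/2)) + (9/4) * (10 * e) * (3 * a\<^sup>2)"
    using first second by linarith
  also have "\<dots> \<le> 80 * e * a\<^sup>2" using e a by (simp add: algebra_simps)
  finally show ?thesis by (simp add: a_def e_def)
qed

definition K :: real where "K = 24 + 40 * M"

lemma K_ge_24: "24 \<le> K"
  using xi'_le_M[of 0] xi'_eq_0_low[of 0] by (simp add: K_def)

lemma nu_upper_transition:
  assumes "3/2 \<le> t" "t \<le> 2"
  shows "nu t \<le> K * (y - 2)"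
proof -
  define e p where "e = y - 2" and "p = t powr (y - 2)"
  have e: "0 \<le> e" "e \<le> 1" using y_ge_2 y_le_3 by (auto simp: e_def)
  have p: "1 \<le> p" "p \<le> 3"
    using one_le_powr_y_minus_2[of t] powr_y_minus_2_le_3[of t] assms by (auto simp: p_def)
  have xi: "0 \<le> xi t" "xi t \<le> 1" "0 \<le> xi' t" "xi' t \<le> M"
    using xi_nonneg xi_le_1 xi'_nonneg xi'_le_M assms by auto
  have first: "y * e * t * p * xi t \<le> 3 * e * 2 * 4 * 1"
    using xi e p y_ge_2 y_le_3 assms by (intro mult_mono) (auto intro!: mult_nonneg_nonneg)
  have "t\<^sup>2 \<le> 4" using mult_mono[OF assms(2) assms(2)] assms by (simp add: power2_eq_square)
  then have "t\<^sup>2 * (y * p - 2) \<le> 4 * (10 * e)"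
    using y_powr_minus_2_le[of t] y_powr_minus_2_nonneg[of t] assms
    by (intro mult_mono) (auto simp: p_def e_def)
  then have second: "t\<^sup>2 * (y * p - 2) * xi' t \<le> 4 * (10 * e) * M"
    using mult_mono[OF _ xi(4)] xi(3) e by simp
  have "nu t = y * e * t * p * xi t + t\<^sup>2 * (y * p - 2) * xi' t"
    using nu_eq[of t] assms by (simp add: e_def p_def)
  also have "\<dots> \<le> 3 * e * 2 * 4 * 1 + 4 * (10 * e) * M" using first second by linarith
  finally show ?thesis by (simp add: e_def K_def algebra_simps)
qed

lemma nu_lower_transition:
  assumes "3/2 \<le> t"
  shows "y * (y - 2) * t * t powr (y - 2) / 8 \<le> nu t"
proof -
  have "y * (y - 2) * t * t powr (y - 2) * (1/8) \<le> y * (y - 2) * t * t powr (y - 2) * xi t"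
    using xi_ge_one_eighth[OF assms] y_ge_2 assms by (intro mult_left_mono) auto
  moreover have "0 \<le> t\<^sup>2 * (y * t powr (y - 2) - 2) * xi' t"
    using y_powr_minus_2_nonneg[of t] xi'_nonneg[of t] assms by simp
  ultimately show ?thesis using nu_eq[of t] assms by simp
qed

lemma nu_eq_power: "2 \<le> t \<Longrightarrow> nu t = y * (y - 2) * t * t powr (y - 2)"
  using nu_eq[of t] xi_high xi'_eq_0_high by simp

lemma zeta'_eq_power: "2 \<le> t \<Longrightarrow> zeta' t = y * (y - 1) * t powr (y - 2)"
  unfolding zeta'_def using xi_high xi'_eq_0_high by simp

lemma iota'_nonneg: "0 \<le> x \<Longrightarrow> 0 \<le> iota' x"
  unfolding iota'_def using nu_nonneg R_gt_2 by simp

lemma iota'_eq_nu: "0 \<le> x \<Longrightarrow> x \<le> R \<Longrightarrow> iota' x = nu x"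
  unfolding iota'_def by simp

lemma continuous_on_iota_Icc: "0 \<le> a \<Longrightarrow> continuous_on {a..b} iota"
  by (rule continuous_on_subset[OF continuous_on_iota]) auto

lemma iota_mono: assumes "0 \<le> a" "a \<le> b" shows "iota a \<le> iota b"
proof -
  have "(\<lambda>_. 0::real) b - (\<lambda>_. 0) a \<le> iota b - iota a"
    by (rule DERIV_le_imp_increment_le[OF assms(2) continuous_on_const continuous_on_iota_Icc[OF assms(1)],
          where f' = "\<lambda>_. 0" and g' = iota'])
       (use assms in \<open>auto intro!: has_real_derivative_iota_at iota'_nonneg\<close>)
  then show ?thesis by simp
qed

lemma iota_nonneg: "0 \<le> x \<Longrightarrow> 0 \<le> iota x"
  using iota_mono[of 0 x] iota_0 by simp

lemma iota_eq_0: assumes "0 \<le> x" "x \<le> 1 \<or> y = 2" shows "iota x = 0"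
proof -
  have "iota x - iota 0 \<le> (\<lambda>_. 0::real) x - (\<lambda>_. 0) 0"
  proof (rule DERIV_le_imp_increment_le[OF assms(1) continuous_on_iota_Icc continuous_on_const,
        where f' = iota' and g' = "\<lambda>_. 0"])
    fix t assume t: "0 < t" "t < x"
    show "(iota has_real_derivative iota' t) (at t)" by (rule has_real_derivative_iota_at[OF t(1)])
    show "iota' t \<le> 0" using nu_eq_0[of "min t R"] t assms R_gt_2 by (auto simp: iota'_def)
  qed auto
  then show ?thesis using iota_0 iota_nonneg[OF assms(1)] by simp
qed

lemma iota_lower_cubic:
  assumes "1 \<le> x" "x \<le> 3/2"
  shows "(y - 2) * (x - 1) ^ 3 \<le> iota x"
proof -
  have "(y - 2) * (x - 1) ^ 3 - (y - 2) * (1 - 1) ^ 3 \<le> iota x - iota 1"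
  proof (rule DERIV_le_imp_increment_le[OF assms(1) _ continuous_on_iota_Icc,
        where f' = "\<lambda>t. (y - 2) * (3 * (t - 1)\<^sup>2)" and g' = iota'])
    fix t assume t: "1 < t" "t < x"
    show "(iota has_real_derivative iota' t) (at t)" using t by (intro has_real_derivative_iota_at) auto
    show "(y - 2) * (3 * (t - 1)\<^sup>2) \<le> iota' t"
      using nu_lower_cubic[of t] iota'_eq_nu[of t] t assms R_gt_2 by (simp add: algebra_simps)
  qed (auto intro!: continuous_intros derivative_eq_intros)
  then show ?thesis using iota_eq_0[of 1] by simp
qed

lemma iota_upper_cubic:
  assumes "1 \<le> x" "x \<le> 3/2"
  shows "iota x \<le> 27 * (y - 2) * (x - 1) ^ 3"
proof -
  have "iota x - iota 1 \<le> 27 * (y - 2) * (x - 1) ^ 3 - 27 * (y - 2) * (1 - 1) ^ 3"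
  proof (rule DERIV_le_imp_increment_le[OF assms(1) continuous_on_iota_Icc,
        where f' = iota' and g' = "\<lambda>t. 27 * (y - 2) * (3 * (t - 1)\<^sup>2)"])
    fix t assume t: "1 < t" "t < x"
    show "(iota has_real_derivative iota' t) (at t)" using t by (intro has_real_derivative_iota_at) auto
    have "iota' t = nu t" using iota'_eq_nu t assms R_gt_2 by simp
    also have "\<dots> \<le> 80 * (y - 2) * (t - 1)\<^sup>2" using nu_upper_cubic[of t] t assms by simp
    also have "\<dots> \<le> 81 * (y - 2) * (t - 1)\<^sup>2"
      unfolding mult.assoc using y_ge_2 by (intro mult_right_mono) auto
    finally show "iota' t \<le> 27 * (y - 2) * (3 * (t - 1)\<^sup>2)" by (simp add: algebra_simps)
  qed (auto intro!: continuous_intros derivative_eq_intros)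
  then show ?thesis using iota_eq_0[of 1] by simp
qed

lemma iota_lower_transition: "3/2 \<le> x \<Longrightarrow> (y - 2) / 8 \<le> iota x"
  using iota_lower_cubic[of "3/2"] iota_mono[of "3/2" x] by (simp add: power3_eq_cube)

lemma iota_pos: assumes "2 < y" "1 < x" shows "0 < iota x"
proof (cases "x \<le> 3/2")
  case True
  then show ?thesis using iota_lower_cubic[of x] assms
    by (smt (verit) zero_less_mult_iff zero_less_power)
qed (use iota_lower_transition[of x] assms in simp)

lemma iota_lower_power:
  assumes "2 \<le> x" "x \<le> R"
  shows "(9/512) * y * (y - 2) * x\<^sup>2 * x powr (y - 2) \<le> iota x"
proof -
  define a c where "a = 3/4 * x" and "c = y * (y - 2) * a * a powr (y - 2) / 8"
  have a: "3/2 \<le> a" "a \<le> x" using assms by (auto simp: a_def)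
  have "c * x - c * a \<le> iota x - iota a"
  proof (rule DERIV_le_imp_increment_le[OF a(2) _ continuous_on_iota_Icc, where f' = "\<lambda>_. c" and g' = iota'])
    fix t assume t: "a < t" "t < x"
    have "a * a powr (y - 2) \<le> t * t powr (y - 2)"
      using t a y_ge_2 by (intro mult_mono powr_mono2) auto
    then have "c \<le> y * (y - 2) * t * t powr (y - 2) / 8"
      unfolding c_def using y_ge_2 by (simp add: mult.assoc divide_right_mono mult_left_mono)
    also have "\<dots> \<le> iota' t" using nu_lower_transition[of t] iota'_eq_nu[of t] t a assms by simp
    finally show "c \<le> iota' t" .
  qed (use a in \<open>auto intro!: continuous_intros derivative_eq_intros has_real_derivative_iota_at\<close>)
  then have "c * (x - a) \<le> iota x" using iota_nonneg[of a] a by (simp add: algebra_simps)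
  moreover have "(3/4) * x powr (y - 2) \<le> a powr (y - 2)"
  proof -
    have "(3/4::real) \<le> (3/4) powr (y - 2)" using powr_mono'[of "y - 2" 1 "3/4::real"] y_le_3 by simp
    then have "(3/4) * x powr (y - 2) \<le> (3/4) powr (y - 2) * x powr (y - 2)" by (rule mult_right_mono) simp
    moreover have "a powr (y - 2) = (3/4) powr (y - 2) * x powr (y - 2)"
      unfolding a_def using assms by (intro powr_mult)
    ultimately show ?thesis by simp
  qed
  then have "y * (y - 2) * a * ((3/4) * x powr (y - 2)) / 8 * (x / 4) \<le> c * (x / 4)"
    unfolding c_def using y_ge_2 a assms by (intro mult_right_mono divide_right_mono mult_left_mono) auto
  moreover have "x - a = x / 4" by (simp add: a_def)
  ultimately show ?thesis by (simp add: a_def power2_eq_square algebra_simps)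
qed

lemma K_squared_ge: "576 \<le> K\<^sup>2"
  using power_mono[OF K_ge_24, of 2] by simp

lemma nu_squared_le_cubic:
  assumes "1 \<le> x" "x \<le> 3/2"
  shows "(nu x)\<^sup>2 \<le> 8 * K\<^sup>2 * (y - 2) * iota x"
proof -
  define e b where "e = y - 2" and "b = x - 1"
  have e: "0 \<le> e" and b: "0 \<le> b" "b \<le> 1/2" using y_ge_2 assms by (auto simp: e_def b_def)
  have "(nu x)\<^sup>2 \<le> (80 * e * b\<^sup>2)\<^sup>2"
    using nu_upper_cubic[OF assms] nu_nonneg[of x] assms by (intro power_mono) (auto simp: e_def b_def)
  also have "\<dots> = 6400 * (e\<^sup>2 * b ^ 3) * b" by (simp add: power2_eq_square power3_eq_cube)
  also have "\<dots> \<le> 6400 * (e\<^sup>2 * b ^ 3) * (1/2)" using b by (intro mult_left_mono) auto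
  also have "\<dots> \<le> 8 * K\<^sup>2 * (e\<^sup>2 * b ^ 3)"
    using mult_right_mono[of 3200 "8 * K\<^sup>2" "e\<^sup>2 * b ^ 3"] K_squared_ge b by simp
  also have "\<dots> = 8 * K\<^sup>2 * e * (e * b ^ 3)" by (simp add: power2_eq_square)
  also have "\<dots> \<le> 8 * K\<^sup>2 * e * iota x"
    using iota_lower_cubic[OF assms] e by (intro mult_left_mono) (auto simp: e_def b_def)
  finally show ?thesis by (simp add: e_def)
qed

lemma nu_squared_le_transition:
  assumes "3/2 \<le> x" "x \<le> 2"
  shows "(nu x)\<^sup>2 \<le> 8 * K\<^sup>2 * (y - 2) * iota x"
proof -
  have "(nu x)\<^sup>2 \<le> (K * (y - 2))\<^sup>2"
    using nu_upper_transition[OF assms] nu_nonneg[of x] assms by (intro power_mono) auto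
  also have "\<dots> = 8 * K\<^sup>2 * (y - 2) * ((y - 2) / 8)" by (simp add: power2_eq_square)
  also have "\<dots> \<le> 8 * K\<^sup>2 * (y - 2) * iota x"
    using iota_lower_transition[OF assms(1)] y_ge_2 by (intro mult_left_mono) auto
  finally show ?thesis .
qed

lemma nu_squared_le_power:
  assumes "2 \<le> x" "x \<le> R"
  shows "(nu x)\<^sup>2 \<le> 4 * K\<^sup>2 * (y - 2) * zeta' x * iota x"
proof -
  define e p where "e = y - 2" and "p = x powr (y - 2)"
  have "1 \<le> (36/512) * K\<^sup>2 * (y - 1)"
    using mult_mono[OF K_squared_ge, of 1 "y - 1"] y_ge_2 by (simp add: mult.commute)
  from mult_right_mono[OF this, of "y\<^sup>2 * e\<^sup>2 * x\<^sup>2 * p\<^sup>2"]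
  have "(nu x)\<^sup>2 \<le> (36/512) * K\<^sup>2 * (y - 1) * (y\<^sup>2 * e\<^sup>2 * x\<^sup>2 * p\<^sup>2)"
    using nu_eq_power[OF assms(1)] by (simp add: e_def p_def power_mult_distrib)
  also have "\<dots> = 4 * K\<^sup>2 * e * (y * (y - 1) * p) * ((9/512) * y * e * x\<^sup>2 * p)"
    by (simp add: power2_eq_square)
  also have "\<dots> \<le> 4 * K\<^sup>2 * e * (y * (y - 1) * p) * iota x"
    using iota_lower_power[OF assms] y_ge_2 by (intro mult_left_mono) (auto simp: e_def p_def)
  finally show ?thesis using zeta'_eq_power[OF assms(1)] by (simp add: e_def p_def)
qed

lemma iota'_squared_le_on_Icc:
  assumes "0 \<le> x" "x \<le> R"
  shows "(iota' x)\<^sup>2 \<le> 4 * K\<^sup>2 * (y - 2) * gsq x * iota x"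
proof -
  have gsq: "gsq x = zeta' x" "2 \<le> gsq x" using assms gsq_ge_2[OF assms(1)] by (auto simp: gsq_def)
  have "8 * K\<^sup>2 * (y - 2) * iota x = (4 * K\<^sup>2 * (y - 2) * iota x) * 2" by simp
  also have "\<dots> \<le> (4 * K\<^sup>2 * (y - 2) * iota x) * gsq x"
    using gsq(2) iota_nonneg[OF assms(1)] y_ge_2 by (intro mult_left_mono) auto
  finally have gsq_factor: "8 * K\<^sup>2 * (y - 2) * iota x \<le> 4 * K\<^sup>2 * (y - 2) * gsq x * iota x"
    by (simp add: ac_simps)
  consider "x \<le> 1" | "1 \<le> x" "x \<le> 3/2" | "3/2 \<le> x" "x \<le> 2" | "2 \<le> x" by linarith
  then have "(nu x)\<^sup>2 \<le> 4 * K\<^sup>2 * (y - 2) * gsq x * iota x"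
  proof cases
    case 1
    then show ?thesis using nu_eq_0 gsq(2) iota_nonneg y_ge_2 assms by simp
  next
    case 2
    show ?thesis using nu_squared_le_cubic[OF 2] gsq_factor by linarith
  next
    case 3
    show ?thesis using nu_squared_le_transition[OF 3] gsq_factor by linarith
  next
    case 4
    then show ?thesis using nu_squared_le_power assms gsq(1) by simp
  qed
  then show ?thesis using iota'_eq_nu[OF assms] by simp
qed

lemma iota'_squared_le:
  assumes "0 \<le> x"
  shows "(iota' x)\<^sup>2 \<le> 4 * K\<^sup>2 * (y - 2) * gsq x * iota x"
proof (cases "x \<le> R")
  case False
  have "iota' x = iota' R" "gsq x = gsq R" using False by (auto simp: iota'_def gsq_def)
  moreover have "iota R \<le> iota x" using iota_mono[of R x] False R_gt_2 by simp
  moreover have "0 \<le> 4 * K\<^sup>2 * (y - 2) * gsq R" using gsq_ge_2[of R] R_gt_2 y_ge_2 by simp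
  ultimately show ?thesis using iota'_squared_le_on_Icc[of R] R_gt_2
    by (smt (verit) mult_left_mono)
qed (use iota'_squared_le_on_Icc assms in simp)

section \<open>The square root of \<iota>\<close>

definition sqrt_iota' :: "real \<Rightarrow> real" where
  "sqrt_iota' x = (if 0 < iota x then iota' x / (2 * sqrt (iota x)) else 0)"

lemma sqrt_iota'_bounds:
  assumes "0 \<le> x"
  shows "0 \<le> sqrt_iota' x \<and> sqrt_iota' x \<le> K * sqrt (y - 2) * sqrt (gsq x)"
proof (cases "0 < iota x")
  case True
  have "iota' x = sqrt ((iota' x)\<^sup>2)" using iota'_nonneg[OF assms] by simp
  also have "\<dots> \<le> sqrt (4 * K\<^sup>2 * (y - 2) * gsq x * iota x)"
    using iota'_squared_le[OF assms] by (rule real_sqrt_le_mono)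
  also have "\<dots> = (K * sqrt (y - 2) * sqrt (gsq x)) * (2 * sqrt (iota x))"
    using K_ge_24 by (simp add: real_sqrt_mult)
  finally show ?thesis
    using True iota'_nonneg[OF assms] by (simp add: sqrt_iota'_def divide_le_eq)
qed (use K_ge_24 y_ge_2 gsq_ge_2[OF assms] in \<open>simp add: sqrt_iota'_def\<close>)

lemma sqrt_iota'_le_near_1:
  assumes "0 \<le> s" "s \<le> 3/2"
  shows "sqrt_iota' s \<le> 40 * sqrt \<bar>s - 1\<bar>"
proof (cases "0 < iota s")
  case True
  then have "1 < s" using iota_eq_0[of s] assms by force
  define e b where "e = y - 2" and "b = s - 1"
  have e: "0 \<le> e" "e \<le> 1" and b: "0 < b" using y_ge_2 y_le_3 \<open>1 < s\<close> by (auto simp: e_def b_def)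
  have "(iota' s)\<^sup>2 \<le> (80 * e * b\<^sup>2)\<^sup>2"
    using nu_upper_cubic[of s] iota'_eq_nu[of s] iota'_nonneg[of s] assms \<open>1 < s\<close> R_gt_2
    by (intro power_mono) (auto simp: e_def b_def)
  also have "\<dots> = 6400 * (e * b) * (e * b ^ 3)" by (simp add: power2_eq_square power3_eq_cube)
  also have "\<dots> \<le> 6400 * (1 * b) * iota s"
    using iota_lower_cubic[of s] assms \<open>1 < s\<close> e b
    by (intro mult_mono mult_left_mono) (auto simp: e_def b_def)
  finally have "(sqrt_iota' s)\<^sup>2 \<le> (40 * sqrt b)\<^sup>2"
    using True b by (simp add: sqrt_iota'_def power_divide divide_le_eq power_mult_distrib)
  then have "sqrt_iota' s \<le> 40 * sqrt b" by (rule power2_le_imp_le) (use b in simp)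
  then show ?thesis using b by (simp add: b_def)
qed (simp add: sqrt_iota'_def)


lemma sqrt_iota_le_near_1:
  assumes "0 \<le> s" "s \<le> 3/2"
  shows "sqrt (iota s) \<le> 6 * sqrt \<bar>s - 1\<bar> * \<bar>s - 1\<bar>"
proof (cases "s \<le> 1")
  case False
  define b where "b = s - 1"
  have b: "0 < b" using False by (simp add: b_def)
  have "iota s \<le> 27 * (y - 2) * b ^ 3" using iota_upper_cubic[of s] False assms by (simp add: b_def)
  also have "\<dots> \<le> 36 * 1 * b ^ 3" using y_le_3 y_ge_2 b by (intro mult_right_mono mult_mono) auto
  also have "\<dots> = (6 * sqrt b * b)\<^sup>2" using b by (simp add: power2_eq_square power3_eq_cube)
  finally have "sqrt (iota s) \<le> sqrt ((6 * sqrt b * b)\<^sup>2)" by (rule real_sqrt_le_mono)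
  then show ?thesis using b by (simp add: b_def)
qed (use iota_eq_0 assms in simp)

lemma eventually_near_1: "eventually (\<lambda>s. 0 \<le> s \<and> s \<le> 3/2) (at 1 within {0::real..})"
proof -
  have "eventually (\<lambda>s. s \<in> {..<3/2}) (nhds (1::real))" by (rule eventually_nhds_in_open) auto
  then show ?thesis unfolding eventually_at_filter by eventually_elim auto
qed

lemma eventually_iota_eq_0:
  assumes "0 \<le> x" "x \<noteq> 1" "iota x = 0"
  shows "eventually (\<lambda>s. iota s = 0) (at x within {0..})"
proof -
  have "x < 1 \<or> y = 2" using iota_pos[of x] assms y_ge_2 by force
  then show ?thesis
  proof
    assume "x < 1"
    have "eventually (\<lambda>s. s \<in> {..<1}) (nhds x)" using \<open>x < 1\<close> by (intro eventually_nhds_in_open) auto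
    then show ?thesis unfolding eventually_at_filter by eventually_elim (auto intro: iota_eq_0)
  next
    assume "y = 2"
    then have "\<forall>s\<ge>0. iota s = 0" using iota_eq_0 by blast
    then show ?thesis by (auto simp: eventually_at_filter intro: always_eventually)
  qed
qed

lemma has_real_derivative_sqrt_iota:
  assumes "0 \<le> x"
  shows "((\<lambda>s. sqrt (iota s)) has_real_derivative sqrt_iota' x) (at x within {0..})"
proof -
  consider "0 < iota x" | "iota x = 0" "x = 1" | "iota x = 0" "x \<noteq> 1"
    using iota_nonneg[OF assms] by force
  then show ?thesis
  proof cases
    case 1
    then have "0 < x" using iota_eq_0[of x] assms by force
    have "((\<lambda>s. sqrt (iota s)) has_real_derivative inverse (sqrt (iota x)) / 2 * iota' x) (at x)"
      by (rule DERIV_chain2[OF DERIV_real_sqrt[OF 1] has_real_derivative_iota_at[OF \<open>0 < x\<close>]])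
    then show ?thesis
      using 1 by (simp add: sqrt_iota'_def field_simps has_field_derivative_at_within)
  next
    case 2
    have "eventually (\<lambda>s. \<bar>sqrt (iota s)\<bar> \<le> 6 * sqrt \<bar>s - 1\<bar> * \<bar>s - 1\<bar>) (at 1 within {0..})"
      using eventually_near_1 by eventually_elim (use sqrt_iota_le_near_1 iota_nonneg in auto)
    moreover have "((\<lambda>s. 6 * sqrt \<bar>s - 1\<bar>) \<longlongrightarrow> 0) (at 1 within {0..})"
      by (auto intro!: tendsto_eq_intros)
    ultimately have "((\<lambda>s. sqrt (iota s)) has_real_derivative 0) (at 1 within {0..})"
      using iota_eq_0[of 1] by (intro has_real_derivative_zero_if_small) auto
    then show ?thesis using 2 by (simp add: sqrt_iota'_def)
  next
    case 3
    have "eventually (\<lambda>s. \<bar>sqrt (iota s)\<bar> \<le> 0 * \<bar>s - x\<bar>) (at x within {0..})"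
      using eventually_iota_eq_0[OF assms 3(2,1)] by eventually_elim simp
    from has_real_derivative_zero_if_small[OF _ this tendsto_const] show ?thesis
      using 3 by (simp add: sqrt_iota'_def)
  qed
qed

lemma continuous_on_sqrt_iota': "continuous_on {0..} sqrt_iota'"
  unfolding continuous_on_eq_continuous_within
proof
  fix x :: real assume "x \<in> {0..}"
  then have x: "0 \<le> x" by simp
  consider "0 < iota x" | "iota x = 0" "x = 1" | "iota x = 0" "x \<noteq> 1"
    using iota_nonneg[OF x] by force
  then show "continuous (at x within {0..}) sqrt_iota'"
  proof cases
    case 1
    have "1 < x" using iota_eq_0[of x] x 1 by (cases "x \<le> 1") auto
    have "2 < y" using iota_eq_0[of x] x 1 y_ge_2 by (cases "y = 2") auto
    have "isCont (\<lambda>s. iota' s / (2 * sqrt (iota s))) x"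
    proof (intro continuous_intros)
      show "isCont iota' x" using continuous_on_interior[OF continuous_on_iota', of x] \<open>1 < x\<close> by simp
      show "isCont iota x" using DERIV_isCont[OF has_real_derivative_iota_at[of x]] \<open>1 < x\<close> by simp
    qed (use 1 in simp)
    moreover have "eventually (\<lambda>s. s \<in> {1<..}) (nhds x)"
      using \<open>1 < x\<close> by (intro eventually_nhds_in_open) auto
    then have "eventually (\<lambda>s. sqrt_iota' s = iota' s / (2 * sqrt (iota s))) (nhds x)"
      by eventually_elim (use iota_pos[OF \<open>2 < y\<close>] in \<open>auto simp: sqrt_iota'_def\<close>)
    ultimately have "isCont sqrt_iota' x" by (simp add: isCont_cong)
    then show ?thesis by (rule continuous_at_imp_continuous_within)
  next
    case 2
    have "eventually (\<lambda>s. norm (sqrt_iota' s) \<le> 40 * sqrt \<bar>s - 1\<bar>) (at 1 within {0..})"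
      using eventually_near_1 by eventually_elim (use sqrt_iota'_le_near_1 sqrt_iota'_bounds in auto)
    moreover have "((\<lambda>s. 40 * sqrt \<bar>s - 1\<bar>) \<longlongrightarrow> 0) (at 1 within {0..})"
      by (auto intro!: tendsto_eq_intros)
    ultimately have "(sqrt_iota' \<longlongrightarrow> 0) (at 1 within {0..})" by (rule Lim_null_comparison)
    then show ?thesis using 2 by (simp add: continuous_within sqrt_iota'_def)
  next
    case 3
    have "eventually (\<lambda>s. sqrt_iota' s = 0) (at x within {0..})"
      using eventually_iota_eq_0[OF x 3(2,1)] by eventually_elim (simp add: sqrt_iota'_def)
    then show ?thesis using 3 by (simp add: continuous_within sqrt_iota'_def tendsto_eventually)
  qed
qed

lemma sqrt_iota_le_rho:
  assumes "0 \<le> x"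
  shows "sqrt (iota x) \<le> K * sqrt (y - 2) * rho x"
proof -
  have "sqrt (iota x) - sqrt (iota 0) \<le> K * sqrt (y - 2) * rho x - K * sqrt (y - 2) * rho 0"
  proof (rule DERIV_le_imp_increment_le[OF assms, where f' = sqrt_iota' and g' = "\<lambda>s. K * sqrt (y - 2) * sqrt (gsq s)"])
    show "continuous_on {0..x} (\<lambda>s. sqrt (iota s))"
      by (intro continuous_intros continuous_on_iota_Icc) simp
    have "continuous_on {0..} rho" using has_real_derivative_rho by (rule DERIV_continuous_on) simp
    then have "continuous_on {0..x} rho" by (rule continuous_on_subset) auto
    then show "continuous_on {0..x} (\<lambda>s. K * sqrt (y - 2) * rho s)" by (intro continuous_intros)
  next
    fix t :: real assume t: "0 < t" "t < x"
    show "((\<lambda>s. sqrt (iota s)) has_real_derivative sqrt_iota' t) (at t)"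
      using has_real_derivative_sqrt_iota[of t] t by (simp add: at_within_Ici_eq_at)
    show "((\<lambda>s. K * sqrt (y - 2) * rho s) has_real_derivative K * sqrt (y - 2) * sqrt (gsq t)) (at t)"
      using has_real_derivative_rho[of t] t by (intro DERIV_cmult) (simp add: at_within_Ici_eq_at)
    show "sqrt_iota' t \<le> K * sqrt (y - 2) * sqrt (gsq t)"
      using sqrt_iota'_bounds[of t] t by simp
  qed
  then show ?thesis using iota_0 by (simp add: rho_def)
qed

lemma sqrt_iotaR_estimates:
  "\<exists>D. continuous_on {0..} D
     \<and> (\<forall>x\<ge>0. ((\<lambda>s. sqrt (iotaR xi R s y)) has_real_derivative D x) (at x within {0..}))
     \<and> (\<forall>x\<ge>0. 0 \<le> D x \<and> D x \<le> K * sqrt (y - 2) * gR xi R x y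
              \<and> 0 \<le> sqrt (iotaR xi R x y)
              \<and> sqrt (iotaR xi R x y) \<le> K * sqrt (y - 2) * rhoR xi R x y)"
proof (intro exI[of _ sqrt_iota'] conjI allI impI continuous_on_sqrt_iota')
  fix x :: real assume x: "0 \<le> x"
  show "((\<lambda>s. sqrt (iotaR xi R s y)) has_real_derivative sqrt_iota' x) (at x within {0..})"
    by (rule has_field_derivative_transform_within[OF has_real_derivative_sqrt_iota[OF x], where d = 1])
       (use x in \<open>auto simp: iotaR_eq\<close>)
  show "0 \<le> sqrt_iota' x" "sqrt_iota' x \<le> K * sqrt (y - 2) * gR xi R x y"
    using sqrt_iota'_bounds[OF x] gR_eq[OF x] by simp_all
  show "0 \<le> sqrt (iotaR xi R x y)" "sqrt (iotaR xi R x y) \<le> K * sqrt (y - 2) * rhoR xi R x y"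
    using iota_nonneg[OF x] sqrt_iota_le_rho[OF x] iotaR_eq[OF x] rhoR_eq[OF x] by simp_all
qed

end

theorem mainTheorem17:
  fixes xi :: "real \<Rightarrow> real"
  assumes xi_mono: "mono_on {0..} xi"
    and xi_C2: "\<exists>xi' xi''. (\<forall>x\<ge>0. (xi has_real_derivative xi' x) (at x within {0..})
                 \<and> (xi' has_real_derivative xi'' x) (at x within {0..}))
               \<and> continuous_on {0..} xi''"
    and xi_low: "\<And>x. 0 \<le> x \<Longrightarrow> x \<le> 3/2 \<Longrightarrow> xi x = max ((x - 1) ^ 3) 0"
    and xi_high: "\<And>x. 2 \<le> x \<Longrightarrow> xi x = 1"
  shows "\<exists>K0>0. \<forall>R>2. \<forall>y\<in>{2..3}. \<exists>D.
           continuous_on {0..} D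
         \<and> (\<forall>x\<ge>0. ((\<lambda>s. sqrt (iotaR xi R s y)) has_real_derivative D x) (at x within {0..}))
         \<and> (\<forall>x\<ge>0. 0 \<le> D x \<and> D x \<le> K0 * sqrt (y - 2) * gR xi R x y
                  \<and> 0 \<le> sqrt (iotaR xi R x y)
                  \<and> sqrt (iotaR xi R x y) \<le> K0 * sqrt (y - 2) * rhoR xi R x y)"
proof -
  obtain xi' xi'' where xi'': "\<forall>x\<ge>0. (xi has_real_derivative xi' x) (at x within {0..})
                 \<and> (xi' has_real_derivative xi'' x) (at x within {0..})"
    using xi_C2 by blast
  then have "continuous_on {0..} xi'" by (intro DERIV_continuous_on[of _ xi']) auto
  then interpret smooth_cutoff xi xi'
    using xi_mono xi'' xi_low xi_high by unfold_locales auto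
  obtain M where M: "\<forall>x\<in>{0..2}. xi' x \<le> M" using xi'_bounded by blast
  have setting: "iota_setting xi xi' y R M" if "2 < R" "y \<in> {2..3}" for R y
    using that M by unfold_locales auto
  have "0 < iota_setting.K M" using iota_setting.K_ge_24[OF setting[of 3 2]] by simp
  then show ?thesis using iota_setting.sqrt_iotaR_estimates[OF setting] by blast
qed

end
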